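(* Let $n\ge 3$ and $q\ge 2$ be integers, $S_1=\sqrt{q^2+4(q-1)(n-2)}$, $S_2=\sqrt{q^2+4(q-1)(n-3)}$. Let $d$ be an integer and define $j$ by $d=n-1-\frac{n-2+j}{q}$, with $j\in\left[\frac{S_1-q}{2},\frac{S_2+q}{2}-1\right)$, and put $s=1-\frac{2d}{n}$. Let $d_0=n-1-\frac{(j-q+1)(n-2)}{qj}$, let $e$ be the unique rational number in $(0,1]$ such that $b:=d_0+e$ is an integer, and define $$f(t)=(t+1)\Big(t-1+\tfrac{2b}{n}\Big)\Big(t-1+\tfrac{2(b-1)}{n}\Big)(t-s)=\sum_{i=0}^4 f_iQ_i^{(n,q)}(t).$$ Provided $f_i\ge 0$ for $i=1,2,3,4$, we have $$A_q(n,s)\le\frac{q^3b(b-1)\big(n(q-1)-j-q+2\big)}{(1-j)q^2b^2+C_1qb-C_2},$$ where $C_1=j(q-1)(2n-1)+j-q$ and $C_2=(q-1)(n-1)[(q-1)(j+1)n+2(j-q+1)]$.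
   Context: $K_i^{(n,q)}(z)=\sum_{l=0}^{i}(-1)^l(q-1)^{i-l}\binom{z}{l}\binom{n-z}{i-l}$, $r_i=(q-1)^i\binom{n}{i}$, $Q_i^{(n,q)}(t)=\frac{1}{r_i}K_i^{(n,q)}\!\big(\tfrac{n(1-t)}{2}\big)$; real polynomials of degree $\le n$ have a unique expansion in the $Q_i^{(n,q)}$. $A_q(n,s)$ is the maximum cardinality of a code $C$ in the $q$-ary Hamming space of length $n$ with $1-\frac{2d(x,y)}{n}\le s$ for all distinct $x,y\in C$, $d$ the Hamming distance. *)

theory Defs
  imports Complex_Main
begin

definition hamming_space :: "nat \<Rightarrow> nat \<Rightarrow> nat list set" where
  "hamming_space q n = {xs. length xs = n \<and> set xs \<subseteq> {..<q}}"

definition hamming_dist :: "nat list \<Rightarrow> nat list \<Rightarrow> nat" where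
  "hamming_dist x y = card {i. i < length x \<and> x ! i \<noteq> y ! i}"

definition is_code :: "nat \<Rightarrow> nat \<Rightarrow> real \<Rightarrow> nat list set \<Rightarrow> bool" where
  "is_code q n s C \<longleftrightarrow> C \<subseteq> hamming_space q n \<and>
     (\<forall>x\<in>C. \<forall>y\<in>C. x \<noteq> y \<longrightarrow> 1 - 2 * real (hamming_dist x y) / real n \<le> s)"

definition A_q :: "nat \<Rightarrow> nat \<Rightarrow> real \<Rightarrow> nat" where
  "A_q q n s = Max {card C | C. is_code q n s C}"

definition krawtchouk :: "nat \<Rightarrow> nat \<Rightarrow> nat \<Rightarrow> real \<Rightarrow> real" where
  "krawtchouk n q i z = (\<Sum>l=0..i. (-1) ^ l * (real q - 1) ^ (i - l) *
       (z gchoose l) * ((real n - z) gchoose (i - l)))"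

definition r_coef :: "nat \<Rightarrow> nat \<Rightarrow> nat \<Rightarrow> real" where
  "r_coef n q i = (real q - 1) ^ i * real (n choose i)"

definition Qpoly :: "nat \<Rightarrow> nat \<Rightarrow> nat \<Rightarrow> real \<Rightarrow> real" where
  "Qpoly n q i t = krawtchouk n q i (real n * (1 - t) / 2) / r_coef n q i"

definition S1 :: "nat \<Rightarrow> nat \<Rightarrow> real" where
  "S1 n q = sqrt ((real q)^2 + 4 * (real q - 1) * (real n - 2))"

definition S2 :: "nat \<Rightarrow> nat \<Rightarrow> real" where
  "S2 n q = sqrt ((real q)^2 + 4 * (real q - 1) * (real n - 3))"

text \<open>j is determined by d = n - 1 - (n - 2 + j)/q.\<close>
definition jpar :: "nat \<Rightarrow> nat \<Rightarrow> int \<Rightarrow> real" where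
  "jpar n q d = real q * (real n - 1 - of_int d) - (real n - 2)"

definition d0par :: "nat \<Rightarrow> nat \<Rightarrow> real \<Rightarrow> real" where
  "d0par n q j = real n - 1 - (j - real q + 1) * (real n - 2) / (real q * j)"

definition fpoly :: "nat \<Rightarrow> int \<Rightarrow> real \<Rightarrow> real \<Rightarrow> real" where
  "fpoly n b s t = (t + 1) * (t - 1 + 2 * of_int b / real n)
                   * (t - 1 + 2 * (of_int b - 1) / real n) * (t - s)"

definition C1 :: "nat \<Rightarrow> nat \<Rightarrow> real \<Rightarrow> real" where
  "C1 n q j = j * (real q - 1) * (2 * real n - 1) + j - real q"

definition C2 :: "nat \<Rightarrow> nat \<Rightarrow> real \<Rightarrow> real" where
  "C2 n q j = (real q - 1) * (real n - 1) *
              ((real q - 1) * (j + 1) * real n + 2 * (j - real q + 1))"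

end

(*
  Delsarte's linear programming bound: if f = sum_i f_i Q_i with f_i >= 0 for i >= 1 and
  f(t) <= 0 at every inner product t <= s of the code, then |C| <= f(1) / f_0.  The nonnegativity
  of sum_{x,y in C} K_i(d(x,y)) comes from writing it as sum_{wt z = i} |sum_{x in C} chi_z(x)|^2
  with the characters chi_z of (Z/q)^n.

  The quartic f of the theorem is <= 0 on the grid t = 1 - 2k/n for k >= d, since (b-k)(b-1-k) >= 0
  for integers k.  By orthogonality of the Krawtchouk polynomials, q^n f_0 = sum_k r_k f(1 - 2k/n);
  binomial moments evaluate this to f_0 = 16 D / (n^3 q^4), where D is the denominator of the
  bound, and D > 0 by the choice of j and b.
*)
theory Submission
  imports Defs "HOL-Computational_Algebra.Polynomial"
begin

section \<open>Characters and the Delsarte inequality\<close>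

definition unit_root :: "nat \<Rightarrow> complex" where
  "unit_root q = cis (2 * pi / real q)"

lemma sum_unit_root_powers:
  assumes "u < q" and "v < q"
  shows "(\<Sum>a<q. (unit_root q ^ u * cnj (unit_root q) ^ v) ^ a) = (if u = v then of_nat q else 0)"
proof -
  define \<zeta> where "\<zeta> = unit_root q ^ u * cnj (unit_root q) ^ v"
  have q: "q > 0" using assms by simp
  have \<zeta>: "\<zeta> = cis (2 * pi * (real u - real v) / real q)"
    unfolding \<zeta>_def unit_root_def by (simp add: DeMoivre cis_cnj cis_mult diff_divide_distrib algebra_simps)
  show ?thesis
  proof (cases "u = v")
    case True
    then show ?thesis using \<zeta> unfolding \<zeta>_def by simp
  next
    case False
    have "\<zeta> ^ q = cis (2 * pi * of_int (int u - int v))"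
      using \<zeta> q by (simp add: DeMoivre)
    then have \<zeta>q: "\<zeta> ^ q = 1"
      by simp
    have "\<zeta> \<noteq> 1"
    proof
      assume "\<zeta> = 1"
      then have "cos (2 * pi * (real u - real v) / real q) = 1"
        using \<zeta> by (metis cis.sel(1) one_complex.sel(1))
      then obtain m :: int where "2 * pi * (real u - real v) / real q = real_of_int m * 2 * pi"
        using cos_one_2pi_int by auto
      then have "(real u - real v) * (2 * pi) = (m * real q) * (2 * pi)" using q by (simp add: field_simps)
      then have "real u - real v = m * real q" by simp
      then have m: "int u - int v = m * int q" by (metis of_int_eq_iff of_int_mult of_int_of_nat_eq of_int_diff)
      have "\<bar>int u - int v\<bar> < int q" using assms by linarith
      then have "\<bar>m\<bar> * int q < 1 * int q" using m by (simp add: abs_mult)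
      then have "\<bar>m\<bar> < 1" by (rule mult_right_less_imp_less) simp
      then have "m = 0" by simp
      then show False using m False by simp
    qed
    then have "(\<Sum>a<q. \<zeta> ^ a) = 0" using geometric_sum[of \<zeta> q] \<zeta>q by simp
    then show ?thesis using False unfolding \<zeta>_def by simp
  qed
qed

lemma sum_monom: "(\<Sum>a\<in>A. monom (f a) k) = monom (\<Sum>a\<in>A. f a) k"
  by (rule poly_eqI) (simp add: coeff_sum)

lemma coordinate_weight_enumerator:
  assumes "u < q" and "v < q"
  shows "(\<Sum>a<q. monom (unit_root q ^ (a * u) * cnj (unit_root q ^ (a * v))) (if a = 0 then 0 else 1))
     = (if u = v then [:1, of_nat q - 1:] else [:1, -1:])"
proof -
  define \<zeta> where "\<zeta> = unit_root q ^ u * cnj (unit_root q) ^ v"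
  have power: "unit_root q ^ (a * u) * cnj (unit_root q ^ (a * v)) = \<zeta> ^ a" for a
    unfolding \<zeta>_def by (simp add: power_mult_distrib power_mult[symmetric] mult.commute)
  obtain q' where q': "q = Suc q'" using assms by (cases q) auto
  have "1 + (\<Sum>a<q'. \<zeta> ^ Suc a) = (if u = v then of_nat q else 0)"
    using sum_unit_root_powers[OF assms, folded \<zeta>_def] unfolding q'
    by (simp only: sum.lessThan_Suc_shift power_0)
  then have tail: "(\<Sum>a<q'. \<zeta> ^ Suc a) = (if u = v then of_nat q else 0) - 1"
    by (simp add: algebra_simps)
  have "(\<Sum>a<q. monom (unit_root q ^ (a * u) * cnj (unit_root q ^ (a * v))) (if a = 0 then 0 else 1))
      = monom (\<zeta> ^ 0) 0 + (\<Sum>a<q'. monom (\<zeta> ^ Suc a) (if Suc a = 0 then 0 else 1))"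
    unfolding power unfolding q' by (simp only: sum.lessThan_Suc_shift if_True refl)
  also have "\<dots> = 1 + monom (\<Sum>a<q'. \<zeta> ^ Suc a) 1"
    by (simp add: sum_monom monom_0 one_pCons)
  also have "\<dots> = (if u = v then [:1, of_nat q - 1:] else [:1, -1:])"
    unfolding tail by (rule poly_eqI) (auto simp: coeff_pCons split: nat.splits)
  finally show ?thesis .
qed

fun character :: "complex \<Rightarrow> nat list \<Rightarrow> nat list \<Rightarrow> complex" where
  "character w (a # z) (u # x) = w ^ (a * u) * character w z x"
| "character w _ _ = 1"

definition hamming_weight :: "nat list \<Rightarrow> nat" where
  "hamming_weight z = length (filter (\<lambda>a. a \<noteq> 0) z)"

lemma hamming_weight_Nil [simp]: "hamming_weight [] = 0"
  and hamming_weight_Cons [simp]: "hamming_weight (a # z) = (if a = 0 then 0 else 1) + hamming_weight z"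
  by (auto simp: hamming_weight_def)

lemma hamming_space_0: "hamming_space q 0 = {[]}"
  by (auto simp: hamming_space_def)

lemma hamming_space_Suc: "hamming_space q (Suc n) = (\<lambda>(a, z). a # z) ` ({..<q} \<times> hamming_space q n)"
  by (auto simp: hamming_space_def length_Suc_conv image_iff)

lemma finite_hamming_space: "finite (hamming_space q n)"
  unfolding hamming_space_def using finite_lists_length_eq[of "{..<q}" n] by (simp add: conj_commute)

lemma hamming_dist_Nil [simp]: "hamming_dist [] y = 0"
  by (simp add: hamming_dist_def)

lemma hamming_dist_Cons: "hamming_dist (u # x) (v # y) = (if u = v then 0 else 1) + hamming_dist x y"
proof -
  have "{i. i < length (u # x) \<and> (u # x) ! i \<noteq> (v # y) ! i}
     = (if u = v then {} else {0}) \<union> Suc ` {i. i < length x \<and> x ! i \<noteq> y ! i}"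
    by (auto simp: less_Suc_eq_0_disj image_iff)
  then show ?thesis
    unfolding hamming_dist_def by (simp add: card_image)
qed

lemma hamming_dist_le_length: "hamming_dist x y \<le> length x"
  unfolding hamming_dist_def by (rule order_trans[OF card_mono[of "{..<length x}"]]) auto

lemma character_weight_enumerator:
  assumes "x \<in> hamming_space q n" and "y \<in> hamming_space q n"
  shows "(\<Sum>z\<in>hamming_space q n.
           monom (character (unit_root q) z x * cnj (character (unit_root q) z y)) (hamming_weight z))
     = [:1, -1:] ^ hamming_dist x y * [:1, of_nat q - 1:] ^ (n - hamming_dist x y)"
  using assms
proof (induction n arbitrary: x y)
  case 0
  then show ?case by (simp add: hamming_space_0 monom_0 one_pCons)
next
  case (Suc n)
  let ?\<chi> = "character (unit_root q)"
  from Suc.prems obtain u x' where x: "x = u # x'" "u < q" "x' \<in> hamming_space q n"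
    by (auto simp: hamming_space_def length_Suc_conv)
  from Suc.prems obtain v y' where y: "y = v # y'" "v < q" "y' \<in> hamming_space q n"
    by (auto simp: hamming_space_def length_Suc_conv)
  have inj: "inj_on (\<lambda>(a, z). a # z) ({..<q} \<times> hamming_space q n)"
    by (auto simp: inj_on_def)
  have "(\<Sum>z\<in>hamming_space q (Suc n). monom (?\<chi> z x * cnj (?\<chi> z y)) (hamming_weight z))
     = (\<Sum>(a, z)\<in>{..<q} \<times> hamming_space q n.
          monom (?\<chi> (a # z) x * cnj (?\<chi> (a # z) y)) (hamming_weight (a # z)))"
    unfolding hamming_space_Suc by (subst sum.reindex[OF inj]) (simp add: case_prod_beta)
  also have "\<dots> = (\<Sum>a<q. \<Sum>z\<in>hamming_space q n.
        monom (unit_root q ^ (a * u) * cnj (unit_root q ^ (a * v))) (if a = 0 then 0 else 1) *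
        monom (?\<chi> z x' * cnj (?\<chi> z y')) (hamming_weight z))"
    unfolding sum.cartesian_product[symmetric] x y by (simp add: mult_monom mult_ac add.commute)
  also have "\<dots> = (\<Sum>a<q. monom (unit_root q ^ (a * u) * cnj (unit_root q ^ (a * v))) (if a = 0 then 0 else 1))
      * (\<Sum>z\<in>hamming_space q n. monom (?\<chi> z x' * cnj (?\<chi> z y')) (hamming_weight z))"
    by (simp only: sum_distrib_left sum_distrib_right) (rule sum.swap)
  also have "\<dots> = (if u = v then [:1, of_nat q - 1:] else [:1, -1:])
      * ([:1, -1:] ^ hamming_dist x' y' * [:1, of_nat q - 1:] ^ (n - hamming_dist x' y'))"
    unfolding coordinate_weight_enumerator[OF x(2) y(2)] Suc.IH[OF x(3) y(3)] ..
  also have "\<dots> = [:1, -1:] ^ hamming_dist x y * [:1, of_nat q - 1:] ^ (Suc n - hamming_dist x y)"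
  proof -
    have "hamming_dist x' y' \<le> n"
      using hamming_dist_le_length[of x' y'] x(3) by (simp add: hamming_space_def)
    then show ?thesis
      unfolding x(1) y(1) hamming_dist_Cons
      by (cases "u = v") (simp_all only: if_True if_False refl add_0 plus_1_eq_Suc Suc_diff_le diff_Suc_Suc power_Suc mult_ac)
  qed
  finally show ?case .
qed

lemma coeff_linear_power: "coeff ([:1, c:] ^ m) l = of_nat (m choose l) * c ^ l"
proof (induction m arbitrary: l)
  case 0
  then show ?case by (cases l) auto
next
  case (Suc m)
  then show ?case by (cases l) (simp_all add: algebra_simps)
qed

lemma krawtchouk_as_coeff:
  assumes "k \<le> n"
  shows "(of_real (krawtchouk n q i (real k)) :: 'a :: {real_algebra_1, comm_ring_1})
     = coeff ([:1, -1:] ^ k * [:1, of_nat q - 1:] ^ (n - k)) i"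
proof -
  have "krawtchouk n q i (real k)
      = (\<Sum>l\<le>i. (of_nat (k choose l) * (-1) ^ l) * (of_nat ((n - k) choose (i - l)) * (real q - 1) ^ (i - l)))"
    unfolding krawtchouk_def using assms
    by (simp add: binomial_gbinomial atLeast0AtMost mult_ac)
  then show ?thesis
    by (simp add: coeff_mult coeff_linear_power[of "-1", simplified] coeff_linear_power)
qed

lemma delsarte_inequality:
  assumes C: "C \<subseteq> hamming_space q n"
  shows "0 \<le> (\<Sum>x\<in>C. \<Sum>y\<in>C. krawtchouk n q i (real (hamming_dist x y)))"
proof -
  let ?\<chi> = "character (unit_root q)"
  let ?H = "hamming_space q n"
  define S where "S z = (\<Sum>x\<in>C. ?\<chi> z x)" for z
  have "complex_of_real (\<Sum>x\<in>C. \<Sum>y\<in>C. krawtchouk n q i (real (hamming_dist x y)))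
      = (\<Sum>x\<in>C. \<Sum>y\<in>C. coeff (\<Sum>z\<in>?H. monom (?\<chi> z x * cnj (?\<chi> z y)) (hamming_weight z)) i)"
  proof (unfold of_real_sum, intro sum.cong refl)
    fix x y assume "x \<in> C" "y \<in> C"
    with C have x: "x \<in> ?H" and y: "y \<in> ?H" by auto
    then have "hamming_dist x y \<le> n"
      using hamming_dist_le_length[of x y] by (simp add: hamming_space_def)
    then show "complex_of_real (krawtchouk n q i (real (hamming_dist x y)))
        = coeff (\<Sum>z\<in>?H. monom (?\<chi> z x * cnj (?\<chi> z y)) (hamming_weight z)) i"
      unfolding character_weight_enumerator[OF x y] by (rule krawtchouk_as_coeff)
  qed
  also have "\<dots> = (\<Sum>x\<in>C. \<Sum>y\<in>C. \<Sum>z\<in>?H. if hamming_weight z = i then ?\<chi> z x * cnj (?\<chi> z y) else 0)"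
    by (simp add: coeff_sum eq_commute)
  also have "\<dots> = (\<Sum>z\<in>?H. \<Sum>x\<in>C. \<Sum>y\<in>C. if hamming_weight z = i then ?\<chi> z x * cnj (?\<chi> z y) else 0)"
    by (subst sum.swap) (simp only: sum.swap[of _ C ?H])
  also have "\<dots> = (\<Sum>z\<in>?H. if hamming_weight z = i then S z * cnj (S z) else 0)"
    unfolding S_def cnj_sum sum_product by (intro sum.cong refl) auto
  also have "\<dots> = complex_of_real (\<Sum>z\<in>?H. if hamming_weight z = i then (cmod (S z))\<^sup>2 else 0)"
    unfolding of_real_sum by (intro sum.cong refl) (simp add: complex_norm_square[symmetric] del: of_real_power)
  finally have "(\<Sum>x\<in>C. \<Sum>y\<in>C. krawtchouk n q i (real (hamming_dist x y)))
      = (\<Sum>z\<in>?H. if hamming_weight z = i then (cmod (S z))\<^sup>2 else 0)"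
    by (simp only: of_real_eq_iff)
  then show ?thesis
    by (simp add: sum_nonneg)
qed

section \<open>Orthogonality and the linear programming bound\<close>

lemma krawtchouk_orthogonal_constant:
  "(\<Sum>k\<le>n. r_coef n q k * krawtchouk n q i (real k)) = (if i = 0 then real q ^ n else 0)"
proof -
  define a where "a = real q - 1"
  have "(\<Sum>k\<le>n. r_coef n q k * krawtchouk n q i (real k))
      = coeff (\<Sum>k\<le>n. of_nat (n choose k) * [:a, -a:] ^ k * [:1, a:] ^ (n - k)) i"
  proof (unfold coeff_sum, intro sum.cong refl)
    fix k assume "k \<in> {..n}"
    then have "krawtchouk n q i (real k) = coeff ([:1, -1:] ^ k * [:1, a:] ^ (n - k)) i"
      using krawtchouk_as_coeff[of k n q i, where 'a=real] by (simp add: a_def)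
    moreover have "[:a, -a:] ^ k = smult (a ^ k) ([:1, -1:] ^ k)"
      by (simp add: smult_power[symmetric])
    ultimately show "r_coef n q k * krawtchouk n q i (real k)
        = coeff (of_nat (n choose k) * [:a, -a:] ^ k * [:1, a:] ^ (n - k)) i"
      by (simp add: r_coef_def a_def of_nat_poly mult_ac)
  qed
  also have "\<dots> = coeff (([:a, -a:] + [:1, a:]) ^ n) i"
    by (simp only: binomial_ring)
  also have "[:a, -a:] + [:1, a:] = [:real q:]"
    by (simp add: a_def)
  finally show ?thesis
    by (simp add: poly_const_pow coeff_pCons split: nat.split)
qed

lemma Qpoly_grid:
  assumes "n > 0"
  shows "Qpoly n q i (1 - 2 * x / real n) = krawtchouk n q i x / r_coef n q i"
  using assms by (simp add: Qpoly_def)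

lemma expansion_constant_coeff:
  assumes n: "n > 0" and f: "\<forall>t. f t = (\<Sum>i\<le>m. c i * Qpoly n q i t)"
  shows "real q ^ n * c 0 = (\<Sum>k\<le>n. r_coef n q k * f (1 - 2 * real k / real n))"
proof -
  have "(\<Sum>k\<le>n. r_coef n q k * f (1 - 2 * real k / real n))
      = (\<Sum>i\<le>m. c i / r_coef n q i * (\<Sum>k\<le>n. r_coef n q k * krawtchouk n q i (real k)))"
    unfolding f[rule_format] Qpoly_grid[OF n] sum_distrib_left
    by (subst sum.swap) (simp add: mult_ac)
  also have "\<dots> = (\<Sum>i\<le>m. if i = 0 then real q ^ n * c 0 else 0)"
    unfolding krawtchouk_orthogonal_constant by (intro sum.cong refl) (simp add: r_coef_def)
  also have "\<dots> = real q ^ n * c 0"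
    by simp
  finally show ?thesis ..
qed

lemma krawtchouk_0 [simp]: "krawtchouk n q 0 z = 1"
  by (simp add: krawtchouk_def)

lemma delsarte_sum_lower_bound:
  assumes n: "n > 0" and q: "q \<ge> 1" and C: "C \<subseteq> hamming_space q n"
    and f: "\<forall>t. f t = (\<Sum>i\<le>m. c i * Qpoly n q i t)"
    and nonneg: "\<forall>i\<in>{1..m}. c i \<ge> 0"
  shows "c 0 * real (card C) ^ 2 \<le> (\<Sum>x\<in>C. \<Sum>y\<in>C. f (1 - 2 * real (hamming_dist x y) / real n))"
proof -
  define K where "K i = (\<Sum>x\<in>C. \<Sum>y\<in>C. krawtchouk n q i (real (hamming_dist x y)))" for i
  have "(\<Sum>x\<in>C. \<Sum>y\<in>C. f (1 - 2 * real (hamming_dist x y) / real n)) = (\<Sum>i\<le>m. c i / r_coef n q i * K i)"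
    unfolding f[rule_format] Qpoly_grid[OF n] K_def sum_distrib_left
    by (subst sum.swap) (simp add: sum.swap[of _ C "{..m}"] mult_ac)
  also have "\<dots> = c 0 * real (card C) ^ 2 + (\<Sum>i\<in>{1..m}. c i / r_coef n q i * K i)"
    by (simp add: K_def r_coef_def power2_eq_square atMost_atLeast0 sum.atLeast_Suc_atMost)
  finally have expansion_sum: "(\<Sum>x\<in>C. \<Sum>y\<in>C. f (1 - 2 * real (hamming_dist x y) / real n))
      = c 0 * real (card C) ^ 2 + (\<Sum>i\<in>{1..m}. c i / r_coef n q i * K i)" .
  have "0 \<le> (\<Sum>i\<in>{1..m}. c i / r_coef n q i * K i)"
  proof (rule sum_nonneg)
    fix i assume "i \<in> {1..m}"
    then show "0 \<le> c i / r_coef n q i * K i"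
      using nonneg delsarte_inequality[OF C, of i] q unfolding K_def
      by (intro mult_nonneg_nonneg divide_nonneg_nonneg) (auto simp: r_coef_def)
  qed
  then show ?thesis
    unfolding expansion_sum by linarith
qed

lemma delsarte_lp_bound:
  assumes n: "n > 0" and q: "q \<ge> 1" and code: "is_code q n s C"
    and f: "\<forall>t. f t = (\<Sum>i\<le>m. c i * Qpoly n q i t)"
    and nonneg: "\<forall>i\<in>{1..m}. c i \<ge> 0"
    and nonpos: "\<forall>k\<le>n. 1 - 2 * real k / real n \<le> s \<longrightarrow> f (1 - 2 * real k / real n) \<le> 0"
  shows "c 0 * real (card C) ^ 2 \<le> real (card C) * f 1"
proof -
  have CH: "C \<subseteq> hamming_space q n" and fin: "finite C"
    using code finite_hamming_space finite_subset by (auto simp: is_code_def)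
  define t where "t x y = 1 - 2 * real (hamming_dist x y) / real n" for x y
  have off_diagonal: "f (t x y) \<le> 0" if "x \<in> C" "y \<in> C" "x \<noteq> y" for x y
    using nonpos code that hamming_dist_le_length[of x y] CH
    by (auto simp: t_def is_code_def hamming_space_def)
  have row: "(\<Sum>y\<in>C. f (t x y)) \<le> f 1" if "x \<in> C" for x
  proof -
    have "(\<Sum>y\<in>C. f (t x y)) = f (t x x) + (\<Sum>y\<in>C - {x}. f (t x y))"
      using fin that by (simp add: sum.remove)
    also have "\<dots> \<le> f 1"
      using off_diagonal that by (auto simp: t_def hamming_dist_def intro!: sum_nonpos)
    finally show ?thesis .
  qed
  have "(\<Sum>x\<in>C. \<Sum>y\<in>C. f (t x y)) \<le> real (card C) * f 1"
    using sum_mono[of C "\<lambda>x. \<Sum>y\<in>C. f (t x y)" "\<lambda>_. f 1"] row by simp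
  with delsarte_sum_lower_bound[OF n q CH f nonneg] show ?thesis
    unfolding t_def by linarith
qed

lemma A_q_attained: "\<exists>C. is_code q n s C \<and> card C = A_q q n s"
proof -
  have "{card C | C. is_code q n s C} \<subseteq> {..card (hamming_space q n)}"
    using finite_hamming_space by (auto simp: is_code_def intro: card_mono)
  moreover have "is_code q n s {}"
    by (simp add: is_code_def)
  ultimately have "A_q q n s \<in> {card C | C. is_code q n s C}"
    unfolding A_q_def by (intro Max_in) (auto intro: finite_subset)
  then show ?thesis by auto
qed

lemma A_q_le_lp_bound:
  assumes n: "n > 0" and q: "q \<ge> 1"
    and f: "\<forall>t. f t = (\<Sum>i\<le>m. c i * Qpoly n q i t)"
    and nonneg: "\<forall>i\<in>{1..m}. c i \<ge> 0"
    and nonpos: "\<forall>k\<le>n. 1 - 2 * real k / real n \<le> s \<longrightarrow> f (1 - 2 * real k / real n) \<le> 0"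
    and c0: "c 0 > 0"
  shows "real (A_q q n s) \<le> f 1 / c 0"
proof -
  have bound: "c 0 * real (card C) ^ 2 \<le> real (card C) * f 1" if "is_code q n s C" for C
    using delsarte_lp_bound[OF n q that f nonneg nonpos] .
  have "is_code q n s {replicate n 0}"
    using q by (auto simp: is_code_def hamming_space_def)
  then have "c 0 \<le> f 1"
    using bound by fastforce
  moreover obtain C where C: "is_code q n s C" "card C = A_q q n s"
    using A_q_attained by blast
  ultimately show ?thesis
    using bound[OF C(1)] c0 by (cases "card C = 0") (simp_all add: C(2) field_simps power2_eq_square)
qed

section \<open>Binomial moments\<close>

text \<open>Multiplied through by (a + b)^i, so that it also holds for i > m without a truncated
  subtraction in the exponent.\<close>
lemma binomial_moment:
  fixes a b :: "'a::comm_semiring_1"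
  shows "(a + b) ^ i * (\<Sum>k\<le>m. of_nat (m choose k) * a ^ k * b ^ (m - k) * of_nat (k choose i))
       = of_nat (m choose i) * a ^ i * (a + b) ^ m"
proof (cases "i \<le> m")
  case True
  have "(\<Sum>k\<le>m. of_nat (m choose k) * a ^ k * b ^ (m - k) * of_nat (k choose i))
      = (\<Sum>k\<in>{i..m}. of_nat (m choose i) * a ^ i * (of_nat ((m - i) choose (k - i)) * a ^ (k - i) * b ^ (m - i - (k - i))))"
  proof (rule sum.mono_neutral_cong_right)
    fix k assume k: "k \<in> {i..m}"
    then have "(m choose k) * (k choose i) = (m choose i) * ((m - i) choose (k - i))"
      by (simp add: choose_mult)
    then have "of_nat (m choose k) * of_nat (k choose i) = (of_nat (m choose i) * of_nat ((m - i) choose (k - i)) :: 'a)"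
      by (metis of_nat_mult)
    moreover have "a ^ k = a ^ i * a ^ (k - i)" "m - k = m - i - (k - i)"
      using k by (auto simp: power_add[symmetric])
    ultimately show "of_nat (m choose k) * a ^ k * b ^ (m - k) * of_nat (k choose i)
      = of_nat (m choose i) * a ^ i * (of_nat ((m - i) choose (k - i)) * a ^ (k - i) * b ^ (m - i - (k - i)))"
      by (metis (no_types, lifting) mult.assoc mult.commute mult.left_commute)
  qed (auto simp: binomial_eq_0)
  also have "\<dots> = of_nat (m choose i) * a ^ i * (\<Sum>l\<le>m - i. of_nat ((m - i) choose l) * a ^ l * b ^ (m - i - l))"
    using True by (simp add: sum_distrib_left sum.atLeastAtMost_shift_0 atLeast0AtMost)
  also have "\<dots> = of_nat (m choose i) * a ^ i * (a + b) ^ (m - i)"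
    by (simp add: binomial_ring)
  finally show ?thesis using True by (simp add: power_add[symmetric] mult_ac)
qed (simp add: binomial_eq_0)

lemma of_nat_choose_2: "real (k choose 2) = real k * (real k - 1) / 2"
  by (simp add: binomial_gbinomial gbinomial_prod_rev numeral_eq_Suc atLeast0_lessThan_Suc)

lemma of_nat_choose_3: "real (k choose 3) = real k * (real k - 1) * (real k - 2) / 6"
  by (simp add: binomial_gbinomial gbinomial_prod_rev numeral_eq_Suc atLeast0_lessThan_Suc algebra_simps)

lemma cubic_binomial_moment:
  fixes m :: nat and a B D :: real
  shows "(a + 1) ^ 3 * (\<Sum>k\<le>m. real (m choose k) * a ^ k * ((B - k) * (B - 1 - k) * (D - k)))
    = (a + 1) ^ m * (B * (B - 1) * D * (a + 1) ^ 3
        - (B^2 + 2 * B * D - 3 * B - 2 * D + 2) * real m * a * (a + 1) ^ 2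
        + (4 * B + 2 * D - 8) * (real m * (real m - 1) / 2) * a ^ 2 * (a + 1)
        - 6 * (real m * (real m - 1) * (real m - 2) / 6) * a ^ 3)"
proof -
  define M where "M i = (\<Sum>k\<le>m. real (m choose k) * a ^ k * real (k choose i))" for i
  have moment: "(a + 1) ^ i * M i = real (m choose i) * a ^ i * (a + 1) ^ m" for i
    unfolding M_def using binomial_moment[of a 1 i m] by simp
  have newton: "(B - k) * (B - 1 - k) * (D - k) = B * (B - 1) * D
      - (B^2 + 2 * B * D - 3 * B - 2 * D + 2) * real (k choose 1)
      + (4 * B + 2 * D - 8) * real (k choose 2) - 6 * real (k choose 3)" for k :: nat
    unfolding of_nat_choose_2 of_nat_choose_3 by (simp add: field_simps power2_eq_square)
  have "(\<Sum>k\<le>m. real (m choose k) * a ^ k * ((B - k) * (B - 1 - k) * (D - k)))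
      = (\<Sum>k\<le>m. B * (B - 1) * D * (real (m choose k) * a ^ k * real (k choose 0))
         - (B^2 + 2 * B * D - 3 * B - 2 * D + 2) * (real (m choose k) * a ^ k * real (k choose 1))
         + (4 * B + 2 * D - 8) * (real (m choose k) * a ^ k * real (k choose 2))
         - 6 * (real (m choose k) * a ^ k * real (k choose 3)))"
    by (intro sum.cong refl, subst newton) (simp only: algebra_simps binomial_n_0 of_nat_1 mult_1_right)
  also have "\<dots> = B * (B - 1) * D * M 0 - (B^2 + 2 * B * D - 3 * B - 2 * D + 2) * M 1
        + (4 * B + 2 * D - 8) * M 2 - 6 * M 3"
    by (simp only: sum.distrib sum_subtractf sum_distrib_left M_def)
  finally have "(a + 1) ^ 3 * (\<Sum>k\<le>m. real (m choose k) * a ^ k * ((B - k) * (B - 1 - k) * (D - k)))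
      = (a + 1) ^ 3 * (B * (B - 1) * D * M 0 - (B^2 + 2 * B * D - 3 * B - 2 * D + 2) * M 1
        + (4 * B + 2 * D - 8) * M 2 - 6 * M 3)"
    by simp
  also have "\<dots> = B * (B - 1) * D * (a + 1) ^ 3 * ((a + 1) ^ 0 * M 0)
        - (B^2 + 2 * B * D - 3 * B - 2 * D + 2) * (a + 1) ^ 2 * ((a + 1) ^ 1 * M 1)
        + (4 * B + 2 * D - 8) * (a + 1) * ((a + 1) ^ 2 * M 2) - 6 * ((a + 1) ^ 3 * M 3)"
    by (simp add: algebra_simps eval_nat_numeral)
  finally show ?thesis
    unfolding moment by (simp add: of_nat_choose_2 of_nat_choose_3 algebra_simps)
qed

lemma sum_binomial_absorb_comp:
  fixes g :: "nat \<Rightarrow> real"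
  shows "(\<Sum>k\<le>n. real (n choose k) * a ^ k * ((real n - real k) * g k))
       = real n * (\<Sum>k\<le>n - 1. real ((n - 1) choose k) * a ^ k * g k)"
proof (cases n)
  case (Suc m)
  have summand: "real (n choose k) * a ^ k * ((real n - real k) * g k) = real n * (real (m choose k) * a ^ k * g k)"
    for k
  proof -
    have "real (n choose k) * a ^ k * ((real n - real k) * g k) = real ((n - k) * (n choose k)) * (a ^ k * g k)"
      by (cases "k \<le> n") (simp_all add: binomial_eq_0 mult_ac)
    then show ?thesis
      unfolding binomial_absorb_comp using Suc by (simp only: of_nat_mult diff_Suc_1 mult.assoc)
  qed
  have "(\<Sum>k\<le>n. real (n choose k) * a ^ k * ((real n - real k) * g k))
      = (\<Sum>k\<le>m. real n * (real (m choose k) * a ^ k * g k))"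
    unfolding summand using Suc by (simp add: binomial_eq_0)
  then show ?thesis
    using Suc by (simp add: sum_distrib_left)
qed simp

section \<open>The quartic test polynomial\<close>

definition lp_denominator :: "nat \<Rightarrow> nat \<Rightarrow> real \<Rightarrow> int \<Rightarrow> real" where
  "lp_denominator n q j b = (1 - j) * (real q)^2 * (of_int b)^2 + C1 n q j * real q * of_int b - C2 n q j"

lemma fpoly_grid:
  assumes n: "n > 0" and s: "s = 1 - 2 * of_int d / real n"
  shows "fpoly n b s (1 - 2 * x / real n)
     = 16 * (real n - x) * ((of_int b - x) * (of_int b - 1 - x) * (of_int d - x)) / real n ^ 4"
  using n unfolding s fpoly_def by (simp add: field_simps) algebra

lemma binomial_sum_fpoly_grid:
  assumes n: "n > 0" and s: "s = 1 - 2 * of_int d / real n"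
  shows "real q ^ 4 * (\<Sum>k\<le>n. r_coef n q k * fpoly n b s (1 - 2 * real k / real n))
     = 16 * real q ^ n * lp_denominator n q (jpar n q d) b / real n ^ 3"
proof -
  define m where "m = n - 1"
  have nm: "n = m + 1" using n unfolding m_def by simp
  define p where "p k = (of_int b - real k) * (of_int b - 1 - real k) * (of_int d - real k)" for k
  have "(\<Sum>k\<le>n. r_coef n q k * fpoly n b s (1 - 2 * real k / real n))
      = 16 / real n ^ 4 * (\<Sum>k\<le>n. real (n choose k) * (real q - 1) ^ k * ((real n - real k) * p k))"
    unfolding fpoly_grid[OF n s] r_coef_def p_def sum_distrib_left by (intro sum.cong refl) simp
  also have "\<dots> = 16 / real n ^ 3 * (\<Sum>k\<le>m. real (m choose k) * (real q - 1) ^ k * p k)"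
    unfolding sum_binomial_absorb_comp m_def[symmetric] using n by (simp add: eval_nat_numeral field_simps)
  finally have "real q ^ 4 * (\<Sum>k\<le>n. r_coef n q k * fpoly n b s (1 - 2 * real k / real n))
      = 16 * real q / real n ^ 3 * ((real q - 1 + 1) ^ 3 * (\<Sum>k\<le>m. real (m choose k) * (real q - 1) ^ k * p k))"
    by (simp add: eval_nat_numeral)
  also have "\<dots> = 16 * real q ^ n * lp_denominator n q (jpar n q d) b / real n ^ 3"
    unfolding p_def cubic_binomial_moment unfolding nm
    by (simp add: lp_denominator_def C1_def C2_def jpar_def field_simps) algebra
  finally show ?thesis .
qed

lemma fpoly_grid_nonpos:
  assumes n: "n > 0" and s: "s = 1 - 2 * of_int d / real n"
    and k: "k \<le> n" and ks: "1 - 2 * real k / real n \<le> s"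
  shows "fpoly n b s (1 - 2 * real k / real n) \<le> 0"
proof -
  have "of_int d \<le> real k"
    using ks n unfolding s by (simp add: field_simps)
  moreover have "0 \<le> (of_int b - real k) * (of_int b - 1 - real k)"
  proof -
    have "0 \<le> (b - int k) * (b - int k - 1)"
      by (cases "b - int k \<ge> 1") (auto intro: mult_nonneg_nonneg mult_nonpos_nonpos)
    then have "0 \<le> real_of_int ((b - int k) * (b - int k - 1))"
      by (simp only: of_int_0_le_iff)
    then show ?thesis
      by (simp add: algebra_simps)
  qed
  ultimately have "(real n - real k) * ((of_int b - real k) * (of_int b - 1 - real k) * (of_int d - real k)) \<le> 0"
    using k by (intro mult_nonneg_nonpos mult_nonneg_nonpos) auto
  then have "16 * ((real n - real k) * ((of_int b - real k) * (of_int b - 1 - real k) * (of_int d - real k)))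
      / real n ^ 4 \<le> 0"
    using n by (intro divide_nonpos_pos mult_nonneg_nonpos[of 16]) simp_all
  then show ?thesis
    unfolding fpoly_grid[OF n s] by (simp only: mult.assoc)
qed

lemma jpar_ge_1_of_S1_le:
  assumes n: "n \<ge> 3" and q: "q \<ge> 2" and j: "(S1 n q - real q) / 2 \<le> jpar n q d"
  shows "jpar n q d \<ge> 1"
proof -
  have "(real q)^2 < (real q)^2 + 4 * (real q - 1) * (real n - 2)"
    using n q by simp
  then have "real q < S1 n q"
    unfolding S1_def by (rule real_less_rsqrt)
  then have "jpar n q d > 0"
    using j by (simp add: field_simps)
  moreover have "jpar n q d = of_int (int q * (int n - 1 - d) - (int n - 2))"
    unfolding jpar_def using n by simp
  ultimately show ?thesis
    by (simp only: of_int_0_less_iff of_int_1_le_iff)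
qed

lemma margin_pos_of_less_S2:
  assumes n: "n \<ge> 3" and q: "q \<ge> 2" and j: "j > 0" and jS2: "j < (S2 n q + real q) / 2 - 1"
  shows "(real q - 1) * (real n - 2) + real q * j - j^2 > 0"
proof (cases "2 * j + 2 - real q \<ge> 0")
  case True
  have "2 * j + 2 - real q < S2 n q"
    using jS2 by (simp add: field_simps)
  then have "(2 * j + 2 - real q)^2 < (S2 n q)^2"
    using True by (intro power_strict_mono) auto
  also have "(S2 n q)^2 = (real q)^2 + 4 * (real q - 1) * (real n - 3)"
    unfolding S2_def using n q by simp
  finally show ?thesis
    using j by (simp add: power2_eq_square algebra_simps)
next
  case False
  then have "j * (j - real q) < 0"
    using j by (simp add: mult_pos_neg)
  moreover have "(real q - 1) * (real n - 2) \<ge> 0"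
    using n q by simp
  ultimately show ?thesis
    by (simp add: power2_eq_square algebra_simps)
qed

lemma lp_denominator_pos:
  assumes q: "q \<ge> 2" and n: "n \<ge> 3" and j: "j \<ge> 1"
    and margin: "(real q - 1) * (real n - 2) + real q * j - j^2 > 0"
    and b: "d0par n q j < of_int b" "of_int b \<le> d0par n q j + 1"
  shows "lp_denominator n q j b > 0"
proof -
  define G where "G = (real q - 1) * (real n - 2) + real q * j - j^2"
  define \<mu> where "\<mu> = of_int b - d0par n q j"
  have \<mu>: "0 < \<mu>" "\<mu> \<le> 1"
    using b unfolding \<mu>_def by auto
  have "j^2 * lp_denominator n q j b
      = (real q - 1) * (j + 1) * (real n - 2) * G + \<mu> * (2 * real q * j * G)
        + j^2 * (j - 1) * (real q)^2 * (\<mu> * (1 - \<mu>))"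
    using q j unfolding lp_denominator_def C1_def C2_def G_def \<mu>_def d0par_def
    by (simp add: field_simps) algebra
  moreover have "0 < (real q - 1) * (j + 1) * (real n - 2) * G"
    using q n j margin unfolding G_def by simp
  moreover have "0 \<le> \<mu> * (2 * real q * j * G)"
    using \<mu> j margin unfolding G_def by simp
  moreover have "0 \<le> j^2 * (j - 1) * (real q)^2 * (\<mu> * (1 - \<mu>))"
    using \<mu> j by simp
  ultimately have "0 < j^2 * lp_denominator n q j b"
    by linarith
  then show ?thesis
    by (simp add: zero_less_mult_iff)
qed

lemma fpoly_constant_coeff:
  assumes n: "n > 0" and q: "q \<ge> 1" and s: "s = 1 - 2 * of_int d / real n"
    and f: "\<forall>t. fpoly n b s t = (\<Sum>i\<le>m. c i * Qpoly n q i t)"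
  shows "c 0 = 16 * lp_denominator n q (jpar n q d) b / (real n ^ 3 * real q ^ 4)"
proof -
  have "real q ^ 4 * (real q ^ n * c 0) = 16 * real q ^ n * lp_denominator n q (jpar n q d) b / real n ^ 3"
    unfolding expansion_constant_coeff[OF n f] by (rule binomial_sum_fpoly_grid[OF n s])
  then show ?thesis
    using n q by (simp add: field_simps)
qed

lemma fpoly_at_1:
  assumes n: "n > 0" and s: "s = 1 - 2 * of_int d / real n"
  shows "fpoly n b s 1 = 16 * of_int b * (of_int b - 1) * of_int d / real n ^ 3"
proof -
  have "fpoly n b s 1 = real n * (16 * of_int b * (of_int b - 1) * of_int d) / (real n * real n ^ 3)"
    using fpoly_grid[OF n s, of b 0] by (simp add: mult_ac power_Suc[symmetric])
  also have "\<dots> = 16 * of_int b * (of_int b - 1) * of_int d / real n ^ 3"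
    using n by simp
  finally show ?thesis .
qed

theorem theorem5:
  fixes n q :: nat and d b :: int and s j :: real and fc :: "nat \<Rightarrow> real"
  assumes hn: "n \<ge> 3" and hq: "q \<ge> 2"
    and hj: "j = jpar n q d"
    and hjrange: "(S1 n q - real q) / 2 \<le> j" "j < (S2 n q + real q) / 2 - 1"
    and hs: "s = 1 - 2 * of_int d / real n"
    and hb: "d0par n q j < of_int b" "of_int b \<le> d0par n q j + 1"
    and hexp: "\<forall>t. fpoly n b s t = (\<Sum>i\<le>4. fc i * Qpoly n q i t)"
    and hpos: "\<forall>i\<in>{1..4}. fc i \<ge> 0"
  shows "real (A_q q n s) \<le>
    (real q ^ 3 * of_int b * (of_int b - 1) * (real n * (real q - 1) - j - real q + 2)) /
    ((1 - j) * (real q)^2 * (of_int b)^2 + C1 n q j * real q * of_int b - C2 n q j)"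
proof -
  have n: "n > 0" and q: "q \<ge> 1"
    using hn hq by auto
  have j: "j \<ge> 1"
    using jpar_ge_1_of_S1_le[OF hn hq] hjrange(1) unfolding hj by blast
  have den: "lp_denominator n q j b > 0"
    using lp_denominator_pos[OF hq hn j margin_pos_of_less_S2[OF hn hq _ hjrange(2)] hb] j by simp
  have fc0: "fc 0 = 16 * lp_denominator n q j b / (real n ^ 3 * real q ^ 4)"
    unfolding hj by (rule fpoly_constant_coeff[OF n q hs hexp])
  have "real (A_q q n s) \<le> fpoly n b s 1 / fc 0"
    using A_q_le_lp_bound[OF n q hexp hpos] fpoly_grid_nonpos[OF n hs] den n q
    by (simp add: fc0)
  also have "\<dots> = real q ^ 3 * of_int b * (of_int b - 1) * (real q * of_int d) / lp_denominator n q j b"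
    unfolding fpoly_at_1[OF n hs] fc0 using den n q by (simp add: field_simps eval_nat_numeral)
  also have "real q * of_int d = real n * (real q - 1) - j - real q + 2"
    unfolding hj jpar_def using hn by (simp add: algebra_simps)
  finally show ?thesis
    unfolding lp_denominator_def .
qed

end
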